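(* If $X$ is a uniformly joinable uniform space and $x_0\in X$, then $\mathrm{pro}\text{-}\pi_1(GP(X,x_0),y_0)$ is trivial, where $y_0$ is the constant generalized path at $x_0$.
   Context: $R(Z,E)$ is the Rips complex of a uniform space $Z$ (vertex set $Z$, simplices the finite $F$ with $F\times F\subset E$); $e(x,y)$ is the edge-path. $\mathrm{pro}\text{-}\pi_1(Z,z)=\{\pi_1(R(Z,E),z)\}_E$ (reverse inclusion, inclusion-induced maps); it is trivial if for every $E$ there is $F\subset E$ with $\pi_1(R(Z,F),z)\to\pi_1(R(Z,E),z)$ trivial. Paths $c,d$ in $R(X,E)$ with end-points in $X$ are $E$-homotopic if their initial points $x_c,x_d$ and terminal points $y_c,y_d$ satisfy $(x_c,x_d),(y_c,y_d)\in E$ and $c\simeq e(x_c,x_d)\ast d\ast e(y_d,y_c)$ rel. end-points in $R(X,E)$. A generalized path from $x$ to $y$ is a family $\{[c_E]\}_E$ of homotopy classes rel. end-points of paths from $x$ to $y$ in $R(X,E)$ with $c_F\simeq c_E$ in $R(X,E)$ for $F\subset E$; it is $F$-short if $(x,y)\in F$ and $c_F\simeq e(x,y)$ in $R(X,F)$. $GP(X,x_0)$ is the set of generalized paths starting at $x_0$ with the uniform structure whose base consists of the sets $F^\ast$ of pairs $(c,d)$ with $c_F$ $F$-homotopic to $d_F$. $X$ is uniformly joinable if for each entourage $E$ there is an entourage $F$ such that any $(x,y)\in F$ are joined by an $E$-short generalized path. *)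

theory Defs
  imports Complex_Main
begin

definition rips_simplex :: "'v set \<Rightarrow> ('v \<times> 'v) set \<Rightarrow> 'v set \<Rightarrow> bool" where
  "rips_simplex Z E S \<longleftrightarrow> finite S \<and> S \<noteq> {} \<and> S \<subseteq> Z \<and> S \<times> S \<subseteq> E"

definition edge_path :: "'v set \<Rightarrow> ('v \<times> 'v) set \<Rightarrow> 'v list \<Rightarrow> bool" where
  "edge_path Z E c \<longleftrightarrow> c \<noteq> [] \<and> set c \<subseteq> Z \<and>
     (\<forall>i. Suc i < length c \<longrightarrow> rips_simplex Z E {c ! i, c ! Suc i})"

definition ep_move :: "'v set \<Rightarrow> ('v \<times> 'v) set \<Rightarrow> 'v list \<Rightarrow> 'v list \<Rightarrow> bool" where
  "ep_move Z E xs ys \<longleftrightarrow>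
     (\<exists>as u v w bs. xs = as @ [u, v, w] @ bs \<and> ys = as @ [u, w] @ bs \<and> rips_simplex Z E {u, v, w}) \<or>
     (\<exists>as u bs. xs = as @ [u, u] @ bs \<and> ys = as @ [u] @ bs \<and> rips_simplex Z E {u})"

text \<open>Homotopy rel. end-points of edge paths in R(Z,E) (edge-path equivalence).\<close>
definition ep_equiv :: "'v set \<Rightarrow> ('v \<times> 'v) set \<Rightarrow> 'v list \<Rightarrow> 'v list \<Rightarrow> bool" where
  "ep_equiv Z E c d \<longleftrightarrow> edge_path Z E c \<and>
     (\<lambda>a b. ep_move Z E a b \<or> ep_move Z E b a)\<^sup>*\<^sup>* c d"

definition ep_class :: "'v set \<Rightarrow> ('v \<times> 'v) set \<Rightarrow> 'v list \<Rightarrow> 'v list set" where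
  "ep_class Z E c = {d. ep_equiv Z E c d}"

text \<open>pro-\<pi>_1(Z,z) is trivial, for a uniform structure given by its set U of entourages:
  for every E there is F \<subseteq> E such that \<pi>_1(R(Z,F),z) \<rightarrow> \<pi>_1(R(Z,E),z) is trivial.\<close>
definition pro_pi1_trivial :: "'v set \<Rightarrow> ('v \<times> 'v) set set \<Rightarrow> 'v \<Rightarrow> bool" where
  "pro_pi1_trivial Z U z \<longleftrightarrow>
     (\<forall>E\<in>U. \<exists>F\<in>U. F \<subseteq> E \<and>
        (\<forall>c. edge_path Z F c \<and> hd c = z \<and> last c = z \<longrightarrow> ep_equiv Z E c [z]))"

definition E_homotopic :: "'v set \<Rightarrow> ('v \<times> 'v) set \<Rightarrow> 'v list \<Rightarrow> 'v list \<Rightarrow> bool" where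
  "E_homotopic Z E c d \<longleftrightarrow> edge_path Z E c \<and> edge_path Z E d \<and>
     (hd c, hd d) \<in> E \<and> (last c, last d) \<in> E \<and>
     edge_path Z E (hd c # d @ [last c]) \<and> ep_equiv Z E c (hd c # d @ [last c])"

definition ents :: "('a::uniform_space \<times> 'a) set set" where
  "ents = {E. eventually (\<lambda>p. p \<in> E) uniformity}"

type_synonym 'a gpath = "('a \<times> 'a) set \<Rightarrow> 'a list set"

text \<open>A generalized path from x to y: for each entourage E a homotopy class (rel. end-points)
  of edge paths from x to y in R(X,E), compatible under inclusion; set to {} off entourages.\<close>
definition gen_path :: "'a::uniform_space \<Rightarrow> 'a \<Rightarrow> 'a gpath \<Rightarrow> bool" where
  "gen_path x y g \<longleftrightarrow>
     (\<forall>E. E \<notin> ents \<longrightarrow> g E = {}) \<and>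
     (\<forall>E\<in>ents. \<exists>c. edge_path UNIV E c \<and> hd c = x \<and> last c = y \<and> g E = ep_class UNIV E c) \<and>
     (\<forall>E\<in>ents. \<forall>F\<in>ents. F \<subseteq> E \<longrightarrow> g F \<subseteq> g E)"

definition short_gen_path :: "('a::uniform_space \<times> 'a) set \<Rightarrow> 'a \<Rightarrow> 'a \<Rightarrow> 'a gpath \<Rightarrow> bool" where
  "short_gen_path F x y g \<longleftrightarrow> (x, y) \<in> F \<and> [x, y] \<in> g F"

definition uniformly_joinable :: "'a::uniform_space itself \<Rightarrow> bool" where
  "uniformly_joinable _ \<longleftrightarrow>
     (\<forall>E\<in>(ents :: ('a \<times> 'a) set set). \<exists>F\<in>ents. \<forall>x y. (x, y) \<in> F \<longrightarrow>
        (\<exists>g. gen_path x y g \<and> short_gen_path E x y g))"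

definition GP :: "'a::uniform_space \<Rightarrow> 'a gpath set" where
  "GP x0 = {g. \<exists>y. gen_path x0 y g}"

definition GP_star :: "'a::uniform_space \<Rightarrow> ('a \<times> 'a) set \<Rightarrow> ('a gpath \<times> 'a gpath) set" where
  "GP_star x0 F = {(g, h). g \<in> GP x0 \<and> h \<in> GP x0 \<and>
      (\<exists>c\<in>g F. \<exists>d\<in>h F. E_homotopic UNIV F c d)}"

text \<open>Entourages of GP(X,x0): the uniformity generated by the base {F*}.\<close>
definition GP_ents :: "'a::uniform_space \<Rightarrow> ('a gpath \<times> 'a gpath) set set" where
  "GP_ents x0 = {W. W \<subseteq> GP x0 \<times> GP x0 \<and> (\<exists>F\<in>ents. GP_star x0 F \<subseteq> W)}"

definition const_gp :: "'a::uniform_space \<Rightarrow> 'a gpath" where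
  "const_gp x0 = (\<lambda>E. if E \<in> ents then ep_class UNIV E [x0] else {})"

end

theory Submission
  imports Defs
begin

text \<open>Fix an entourage F of X and, by uniform joinability, a smaller entourage F' whose pairs are
  joined by F-short generalized paths. Concatenating these along an F'-edge path q from x0 lifts q
  to a generalized path whose F-component is the class of q; lifting all prefixes of q gives an
  edge path in R(GP(X,x0), F*) that only depends on the F'-homotopy class of q. A loop in
  R(GP(X,x0), F'*) at the constant path is then coned off: each vertex g is joined to the base by
  the lifted prefixes of a representative of g, and two such rays together with the edge between
  their endpoints bound a fan of triangles of R(GP(X,x0), F*).\<close>

section \<open>Edge paths in Rips complexes\<close>

lemma rips_simplex_mono: "rips_simplex Z E S \<Longrightarrow> E \<subseteq> E' \<Longrightarrow> rips_simplex Z E' S"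
  unfolding rips_simplex_def by auto

lemma rips_simplex_singleton_iff: "rips_simplex Z E {a} \<longleftrightarrow> a \<in> Z \<and> (a, a) \<in> E"
  unfolding rips_simplex_def by auto

lemma rips_simplex_pair_iff:
  "rips_simplex Z E {a, b} \<longleftrightarrow>
     a \<in> Z \<and> b \<in> Z \<and> (a, a) \<in> E \<and> (a, b) \<in> E \<and> (b, a) \<in> E \<and> (b, b) \<in> E"
  unfolding rips_simplex_def by auto

lemma rips_simplex_triple_iff:
  "rips_simplex Z E {a, b, c} \<longleftrightarrow> a \<in> Z \<and> b \<in> Z \<and> c \<in> Z \<and>
     (a, a) \<in> E \<and> (a, b) \<in> E \<and> (a, c) \<in> E \<and> (b, a) \<in> E \<and> (b, b) \<in> E \<and>
     (b, c) \<in> E \<and> (c, a) \<in> E \<and> (c, b) \<in> E \<and> (c, c) \<in> E"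
  unfolding rips_simplex_def by auto

lemma edge_path_nonempty: "edge_path Z E c \<Longrightarrow> c \<noteq> []"
  unfolding edge_path_def by auto

lemma edge_path_singleton_iff: "edge_path Z E [a] \<longleftrightarrow> a \<in> Z"
  unfolding edge_path_def by auto

lemma edge_path_Cons_Cons_iff:
  "edge_path Z E (a # b # r) \<longleftrightarrow> a \<in> Z \<and> rips_simplex Z E {a, b} \<and> edge_path Z E (b # r)"
  (is "?lhs \<longleftrightarrow> ?rhs")
proof
  assume ?lhs
  then show ?rhs
    unfolding edge_path_def by (auto simp: less_Suc_eq_0_disj dest: spec[of _ 0] spec[of _ "Suc _"])
next
  assume ?rhs
  then show ?lhs
    unfolding edge_path_def by (auto simp: less_Suc_eq_0_disj nth_Cons split: nat.split)
qed

lemma edge_path_append_iff: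
  assumes "xs \<noteq> []" "ys \<noteq> []"
  shows "edge_path Z E (xs @ ys) \<longleftrightarrow>
           edge_path Z E xs \<and> edge_path Z E ys \<and> rips_simplex Z E {last xs, hd ys}"
  using assms
proof (induction xs rule: induct_list012)
  case (2 x)
  then show ?case by (cases ys) (auto simp: edge_path_singleton_iff edge_path_Cons_Cons_iff)
next
  case (3 x x' xs)
  then show ?case by (auto simp: edge_path_Cons_Cons_iff)
qed simp

lemma edge_path_append_left_iff:
  "ys \<noteq> [] \<Longrightarrow> edge_path Z E (as @ ys) \<longleftrightarrow>
     (as = [] \<or> edge_path Z E as \<and> rips_simplex Z E {last as, hd ys}) \<and> edge_path Z E ys"
  by (cases "as = []") (auto simp: edge_path_append_iff)

lemma edge_path_append_right_iff:
  "ys \<noteq> [] \<Longrightarrow> edge_path Z E (ys @ bs) \<longleftrightarrow>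
     edge_path Z E ys \<and> (bs = [] \<or> rips_simplex Z E {last ys, hd bs} \<and> edge_path Z E bs)"
  by (cases "bs = []") (auto simp: edge_path_append_iff)

lemma edge_path_snoc_iff:
  "xs \<noteq> [] \<Longrightarrow> edge_path Z E (xs @ [b]) \<longleftrightarrow> edge_path Z E xs \<and> rips_simplex Z E {last xs, b}"
  by (auto simp: edge_path_append_iff edge_path_singleton_iff rips_simplex_pair_iff)

lemma edge_path_mono: "edge_path Z E c \<Longrightarrow> E \<subseteq> E' \<Longrightarrow> edge_path Z E' c"
  unfolding edge_path_def using rips_simplex_mono by blast

lemma edge_path_join:
  assumes "edge_path Z E c" "edge_path Z E d" "last c = hd d"
  shows "edge_path Z E (c @ tl d)"
proof (cases "tl d")
  case Nil
  then show ?thesis using assms(1) by simp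
next
  case (Cons b r)
  then have "d = hd d # b # r"
    using edge_path_nonempty[OF assms(2)] by (metis list.collapse)
  then show ?thesis
    using assms Cons edge_path_nonempty[OF assms(1)]
    by (metis edge_path_Cons_Cons_iff edge_path_append_iff list.sel(1) list.simps(3))
qed

lemma ep_move_skipI:
  "rips_simplex Z E {u, v, w} \<Longrightarrow> ep_move Z E (as @ [u, v, w] @ bs) (as @ [u, w] @ bs)"
  unfolding ep_move_def by blast

lemma ep_move_stutterI: "rips_simplex Z E {u} \<Longrightarrow> ep_move Z E (as @ [u, u] @ bs) (as @ [u] @ bs)"
  unfolding ep_move_def by blast

lemma ep_moveE [consumes 1, case_names skip stutter]:
  assumes "ep_move Z E xs ys"
  obtains (skip) as u v w bs
    where "xs = as @ [u, v, w] @ bs" "ys = as @ [u, w] @ bs" "rips_simplex Z E {u, v, w}"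
  | (stutter) as u bs where "xs = as @ [u, u] @ bs" "ys = as @ [u] @ bs" "rips_simplex Z E {u}"
  using assms unfolding ep_move_def by blast

lemma ep_move_append:
  assumes "ep_move Z E xs ys"
  shows "ep_move Z E (as @ xs @ bs) (as @ ys @ bs)"
  using assms
proof (cases rule: ep_moveE)
  case (skip as' u v w bs')
  then show ?thesis using ep_move_skipI[of Z E u v w "as @ as'" "bs' @ bs"] by simp
next
  case (stutter as' u bs')
  then show ?thesis using ep_move_stutterI[of Z E u "as @ as'" "bs' @ bs"] by simp
qed

lemma ep_move_edge_path_iff: "ep_move Z E xs ys \<Longrightarrow> edge_path Z E xs \<longleftrightarrow> edge_path Z E ys"
  unfolding ep_move_def
  by (auto simp: edge_path_append_left_iff edge_path_append_right_iff edge_path_singleton_iff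
      edge_path_Cons_Cons_iff rips_simplex_singleton_iff rips_simplex_pair_iff rips_simplex_triple_iff)

lemma ep_move_hd_last: "ep_move Z E xs ys \<Longrightarrow> hd xs = hd ys \<and> last xs = last ys"
  unfolding ep_move_def by (auto simp: hd_append last_append)

lemma ep_move_mono: "ep_move Z E xs ys \<Longrightarrow> E \<subseteq> E' \<Longrightarrow> ep_move Z E' xs ys"
  unfolding ep_move_def using rips_simplex_mono by metis

lemma equivclp_invariant:
  assumes "equivclp r a b" "P a" "\<And>x y. r x y \<Longrightarrow> P x \<longleftrightarrow> P y"
  shows "P b"
  using assms by (induction rule: equivclp_induct) blast+

lemma equivclp_map:
  assumes "equivclp r a b" "P a"
    and "\<And>x y. r x y \<Longrightarrow> P x \<longleftrightarrow> P y"
    and "\<And>x y. r x y \<Longrightarrow> P x \<Longrightarrow> equivclp s (f x) (f y)"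
  shows "equivclp s (f a) (f b)"
  using assms(1)
proof (induction rule: equivclp_induct)
  case (step y z)
  have "P y" using equivclp_invariant[of r a y P] step.hyps(1) assms(2,3) by blast
  with step.hyps(2) have "equivclp s (f y) (f z)"
    using assms(3,4) by (blast intro: equivclp_sym)
  with step.IH show ?case by (rule equivclp_trans)
qed simp

lemma equivclp_mono: "r \<le> s \<Longrightarrow> equivclp r \<le> equivclp s"
  unfolding equivclp_def by (rule rtranclp_mono) (auto simp: symclp_def)

lemma ep_equiv_iff_equivclp:
  "ep_equiv Z E c d \<longleftrightarrow> edge_path Z E c \<and> equivclp (ep_move Z E) c d"
  unfolding ep_equiv_def equivclp_def symclp_def ..

lemma ep_equiv_edge_pathD:
  assumes "ep_equiv Z E c d"
  shows "edge_path Z E c" "edge_path Z E d"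
  using assms equivclp_invariant[of "ep_move Z E" c d "edge_path Z E"] ep_move_edge_path_iff
  unfolding ep_equiv_iff_equivclp by blast+

lemma ep_equiv_hd_last:
  assumes "ep_equiv Z E c d"
  shows "hd c = hd d" "last c = last d"
proof -
  have "equivclp (ep_move Z E) c d" using assms unfolding ep_equiv_iff_equivclp by blast
  then have "hd c = hd d \<and> last c = last d"
    by (rule equivclp_invariant[where P = "\<lambda>d. hd c = hd d \<and> last c = last d"])
      (auto dest: ep_move_hd_last)
  then show "hd c = hd d" "last c = last d" by auto
qed

lemma ep_equiv_refl: "edge_path Z E c \<Longrightarrow> ep_equiv Z E c c"
  unfolding ep_equiv_iff_equivclp by simp

lemma ep_equiv_sym: "ep_equiv Z E c d \<Longrightarrow> ep_equiv Z E d c"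
  using ep_equiv_edge_pathD unfolding ep_equiv_iff_equivclp by (blast intro: equivclp_sym)

lemma ep_equiv_trans [trans]: "ep_equiv Z E c d \<Longrightarrow> ep_equiv Z E d e \<Longrightarrow> ep_equiv Z E c e"
  unfolding ep_equiv_iff_equivclp by (blast intro: equivclp_trans)

lemma ep_equiv_append:
  assumes "ep_equiv Z E c d" "edge_path Z E (as @ c @ bs)"
  shows "ep_equiv Z E (as @ c @ bs) (as @ d @ bs)"
  using assms equivclp_map[of "ep_move Z E" c d "\<lambda>_. True" "ep_move Z E" "\<lambda>c. as @ c @ bs"]
    ep_move_append
  unfolding ep_equiv_iff_equivclp by blast

lemma ep_equiv_mono:
  assumes "ep_equiv Z E c d" "E \<subseteq> E'"
  shows "ep_equiv Z E' c d"
proof -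
  have "ep_move Z E \<le> ep_move Z E'"
    using ep_move_mono[OF _ assms(2)] by blast
  then show ?thesis
    using assms edge_path_mono equivclp_mono unfolding ep_equiv_iff_equivclp by blast
qed

lemma ep_equiv_if_ep_move: "edge_path Z E xs \<Longrightarrow> ep_move Z E xs ys \<Longrightarrow> ep_equiv Z E xs ys"
  unfolding ep_equiv_iff_equivclp by blast

lemma ep_class_eq: "ep_equiv Z E c d \<Longrightarrow> ep_class Z E c = ep_class Z E d"
  unfolding ep_class_def using ep_equiv_sym ep_equiv_trans by blast

lemma mem_ep_class_iff: "d \<in> ep_class Z E c \<longleftrightarrow> ep_equiv Z E c d"
  unfolding ep_class_def by simp

lemma ep_equiv_backtrack:
  assumes "rips_simplex Z E {u, v}"
  shows "ep_equiv Z E [u, v, u] [u]"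
proof -
  have "ep_equiv Z E ([] @ [u, v, u] @ []) ([] @ [u, u] @ [])"
    using assms
    by (intro ep_equiv_if_ep_move ep_move_skipI)
      (auto simp: edge_path_Cons_Cons_iff edge_path_singleton_iff rips_simplex_pair_iff
        rips_simplex_triple_iff)
  moreover have "ep_equiv Z E ([] @ [u, u] @ []) ([] @ [u] @ [])"
    using assms
    by (intro ep_equiv_if_ep_move ep_move_stutterI)
      (auto simp: edge_path_Cons_Cons_iff edge_path_singleton_iff rips_simplex_pair_iff
        rips_simplex_singleton_iff)
  ultimately show ?thesis by (simp add: ep_equiv_trans)
qed

lemma ep_equiv_stutter:
  assumes "(u, u) \<in> E" "edge_path Z E (as @ [u] @ bs)"
  shows "ep_equiv Z E (as @ [u] @ bs) (as @ [u, u] @ bs)"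
proof -
  have "u \<in> Z" using assms(2) unfolding edge_path_def by auto
  then have "ep_move Z E (as @ [u, u] @ bs) (as @ [u] @ bs)"
    using assms(1) ep_move_stutterI[of Z E u as bs] by (simp add: rips_simplex_singleton_iff)
  then show ?thesis
    using assms(2) ep_move_edge_path_iff ep_equiv_if_ep_move ep_equiv_sym by blast
qed

lemma ep_equiv_join:
  assumes "ep_equiv Z E c c'" "ep_equiv Z E d d'" "last c = hd d"
  shows "ep_equiv Z E (c @ tl d) (c' @ tl d')"
proof -
  note c = ep_equiv_edge_pathD[OF assms(1)] and d = ep_equiv_edge_pathD[OF assms(2)]
  have last_c': "last c' = hd d" "last c' = hd d'"
    using assms(3) ep_equiv_hd_last[OF assms(1)] ep_equiv_hd_last[OF assms(2)] by auto
  have join_eq: "c' @ tl e = butlast c' @ e" if "e \<noteq> []" "hd e = last c'" for e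
    using that edge_path_nonempty[OF c(2)] by (metis append_butlast_last_id append.assoc
        append_Cons append_Nil list.collapse)
  have "ep_equiv Z E ([] @ c @ tl d) ([] @ c' @ tl d)"
    using ep_equiv_append[OF assms(1), of "[]" "tl d"] edge_path_join[OF c(1) d(1) assms(3)] by simp
  moreover have "ep_equiv Z E (butlast c' @ d @ []) (butlast c' @ d' @ [])"
    using ep_equiv_append[OF assms(2), of "butlast c'" "[]"] edge_path_join[OF c(2) d(1) last_c'(1)]
      join_eq[OF edge_path_nonempty[OF d(1)]] last_c'(1) by simp
  ultimately show ?thesis
    using join_eq[of d] join_eq[of d'] edge_path_nonempty[OF d(1)] edge_path_nonempty[OF d(2)]
      last_c' by (simp add: ep_equiv_trans)
qed

lemma ep_equiv_cancel_prefix: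
  assumes AL: "ep_equiv Z E (A @ L) (A @ [v])" and A: "ep_equiv Z E A [p]"
    and "L \<noteq> []" "hd L = v"
  shows "ep_equiv Z E L [v]"
proof -
  obtain L' where L_eq: "L = v # L'" using assms(3,4) by (cases L) auto
  have "A \<noteq> []" using edge_path_nonempty[OF ep_equiv_edge_pathD(1)[OF A]] .
  moreover have "last A = p" using ep_equiv_hd_last(2)[OF A] by simp
  ultimately have L: "edge_path Z E L" and pv: "rips_simplex Z E {p, v}"
    using ep_equiv_edge_pathD(1)[OF AL] edge_path_append_iff[OF _ \<open>L \<noteq> []\<close>] assms(4) by blast+
  have vp: "rips_simplex Z E {v, p}" using pv by (simp add: insert_commute)
  have "p \<in> Z" "v \<in> Z" using pv by (simp_all add: rips_simplex_pair_iff)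
  then have pL_path: "edge_path Z E (p # L)" and vpL_path: "edge_path Z E (v # p # L)"
    using L pv vp by (simp_all add: L_eq edge_path_Cons_Cons_iff)
  have "ep_equiv Z E ([] @ [p] @ L) ([] @ A @ L)"
    using ep_equiv_append[OF ep_equiv_sym[OF A], of "[]" L] pL_path by simp
  also have "ep_equiv Z E \<dots> (A @ [v])" using AL by simp
  also have "ep_equiv Z E \<dots> ([] @ [p] @ [v])"
    using ep_equiv_append[OF A, of "[]" "[v]"] ep_equiv_edge_pathD(2)[OF AL] by simp
  finally have pL: "ep_equiv Z E (p # L) [p, v]" by simp
  have "ep_equiv Z E L (v # p # L)"
    using ep_equiv_append[OF ep_equiv_backtrack[OF vp], of "[]" L'] vpL_path
    by (simp add: L_eq ep_equiv_sym)
  also have "ep_equiv Z E \<dots> [v, p, v]"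
    using ep_equiv_append[OF pL, of "[v]" "[]"] vpL_path by simp
  also have "ep_equiv Z E \<dots> [v]" using ep_equiv_backtrack[OF vp] .
  finally show ?thesis .
qed

section \<open>E-homotopy of paths with a common start\<close>

lemma E_homotopic_iff:
  assumes "refl E" "hd c = hd d"
  shows "E_homotopic UNIV E c d \<longleftrightarrow> edge_path UNIV E d \<and> ep_equiv UNIV E c (d @ [last c])"
proof -
  have stutter: "ep_equiv UNIV E (d @ [last c]) (hd c # d @ [last c])"
    if "d \<noteq> []" "edge_path UNIV E (d @ [last c])"
  proof -
    obtain a r where d: "d = a # r" using \<open>d \<noteq> []\<close> by (cases d) auto
    show ?thesis
      using ep_equiv_stutter[of a E UNIV "[]" "r @ [last c]"] that(2) assms by (simp add: d reflD)
  qed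
  show ?thesis
  proof
    assume "E_homotopic UNIV E c d"
    then have d: "edge_path UNIV E d" and c: "ep_equiv UNIV E c (hd c # d @ [last c])"
      and "edge_path UNIV E (hd d # d @ [last c])"
      unfolding E_homotopic_def using assms(2) by auto
    then have "edge_path UNIV E (d @ [last c])"
      using edge_path_nonempty[OF d]
      by (metis edge_path_Cons_Cons_iff append_Cons list.collapse)
    then have "ep_equiv UNIV E c (d @ [last c])"
      using ep_equiv_trans[OF c ep_equiv_sym[OF stutter]] edge_path_nonempty[OF d] by blast
    with d show "edge_path UNIV E d \<and> ep_equiv UNIV E c (d @ [last c])" ..
  next
    assume "edge_path UNIV E d \<and> ep_equiv UNIV E c (d @ [last c])"
    then have d: "edge_path UNIV E d" and c: "ep_equiv UNIV E c (d @ [last c])" by blast+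
    have snoc: "edge_path UNIV E (d @ [last c])" using ep_equiv_edge_pathD(2)[OF c] .
    then have "rips_simplex UNIV E {last d, last c}"
      using edge_path_snoc_iff[OF edge_path_nonempty[OF d]] by blast
    then have "(last c, last d) \<in> E" by (simp add: rips_simplex_pair_iff)
    moreover have "(hd c, hd d) \<in> E" using assms by (simp add: reflD)
    moreover have "ep_equiv UNIV E c (hd c # d @ [last c])"
      using ep_equiv_trans[OF c stutter[OF edge_path_nonempty[OF d] snoc]] .
    ultimately show "E_homotopic UNIV E c d"
      unfolding E_homotopic_def using d ep_equiv_edge_pathD by blast
  qed
qed

lemma E_homotopic_refl:
  assumes "refl E" "edge_path UNIV E c"
  shows "E_homotopic UNIV E c c"
proof -
  have "c = butlast c @ [last c] @ []" "c @ [last c] = butlast c @ [last c, last c] @ []"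
    using edge_path_nonempty[OF assms(2)] by simp_all
  then have "ep_equiv UNIV E c (c @ [last c])"
    using ep_equiv_stutter[of "last c" E UNIV "butlast c" "[]"] assms by (metis reflD)
  then show ?thesis using E_homotopic_iff assms by blast
qed

lemma E_homotopic_sym:
  assumes "refl E" "hd c = hd d" "E_homotopic UNIV E c d"
  shows "E_homotopic UNIV E d c"
proof -
  have d: "edge_path UNIV E d" and cd: "ep_equiv UNIV E c (d @ [last c])"
    using E_homotopic_iff[OF assms(1,2)] assms(3) by simp_all
  obtain d0 y where d_eq: "d = d0 @ [y]"
    using edge_path_nonempty[OF d] by (cases d rule: rev_cases) auto
  have c_ne: "c \<noteq> []" using edge_path_nonempty[OF ep_equiv_edge_pathD(1)[OF cd]] .
  have last_edge: "rips_simplex UNIV E {y, last c}"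
    using ep_equiv_edge_pathD(2)[OF cd] edge_path_snoc_iff[of d] d_eq by simp
  then have "edge_path UNIV E ([] @ c @ [y])"
    using ep_equiv_edge_pathD(1)[OF cd] edge_path_snoc_iff[OF c_ne] by (simp add: insert_commute)
  from ep_equiv_append[OF cd this]
  have "ep_equiv UNIV E (c @ [y]) (d0 @ [y, last c, y] @ [])" by (simp add: d_eq)
  also have "ep_equiv UNIV E \<dots> (d0 @ [y] @ [])"
    using ep_equiv_append[OF ep_equiv_backtrack[OF last_edge]] ep_equiv_edge_pathD(2)[OF calculation] .
  finally have "ep_equiv UNIV E d (c @ [last d])" by (simp add: d_eq ep_equiv_sym)
  then show ?thesis
    using E_homotopic_iff[OF assms(1) assms(2)[symmetric]] ep_equiv_edge_pathD(1)[OF cd] by blast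
qed

lemma E_homotopic_mono:
  assumes "E_homotopic Z E c d" "E \<subseteq> E'"
  shows "E_homotopic Z E' c d"
  using assms(1) edge_path_mono[OF _ assms(2)] ep_equiv_mono[OF _ assms(2)] assms(2)
  unfolding E_homotopic_def by blast

lemma E_homotopic_ep_equiv_cong:
  assumes "refl E" "hd a = hd b" "E_homotopic UNIV E a b"
    and "ep_equiv UNIV E a a'" "ep_equiv UNIV E b b'"
  shows "E_homotopic UNIV E a' b'"
proof -
  have ab: "ep_equiv UNIV E a (b @ [last a])" using assms(1-3) E_homotopic_iff by blast
  then have "ep_equiv UNIV E (b @ [last a]) (b' @ [last a])"
    using ep_equiv_append[OF assms(5), of "[]" "[last a]"] ep_equiv_edge_pathD(2) by fastforce
  then have "ep_equiv UNIV E a' (b' @ [last a'])"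
    using ab assms(4) ep_equiv_hd_last(2)[OF assms(4)] by (metis ep_equiv_sym ep_equiv_trans)
  moreover have "hd a' = hd b'"
    using assms(2) ep_equiv_hd_last(1)[OF assms(4)] ep_equiv_hd_last(1)[OF assms(5)] by simp
  ultimately show ?thesis
    using E_homotopic_iff[OF assms(1)] ep_equiv_edge_pathD(2)[OF assms(5)] by blast
qed

lemma E_homotopic_snoc:
  assumes "refl E" "edge_path UNIV E (q @ [b])" "q \<noteq> []"
  shows "E_homotopic UNIV E (q @ [b]) q"
proof (rule E_homotopic_iff[OF assms(1), THEN iffD2])
  show "hd (q @ [b]) = hd q" using assms(3) by simp
  show "edge_path UNIV E q \<and> ep_equiv UNIV E (q @ [b]) (q @ [last (q @ [b])])"
    using edge_path_snoc_iff[OF assms(3)] assms(2) ep_equiv_refl[OF assms(2)] by simp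
qed

lemma E_homotopic_skip:
  assumes "refl E" "edge_path UNIV E (as @ [u, v, w])" "rips_simplex UNIV E {u, v, w}"
  shows "E_homotopic UNIV E (as @ [u, v, w]) (as @ [u])"
proof -
  have "ep_equiv UNIV E (as @ [u, v, w] @ []) (as @ [u, w] @ [])"
    using assms(2,3) by (intro ep_equiv_if_ep_move ep_move_skipI) simp_all
  moreover have "edge_path UNIV E (as @ [u])"
    using assms(2) by (simp add: edge_path_append_left_iff edge_path_Cons_Cons_iff edge_path_singleton_iff)
  moreover have "hd (as @ [u, v, w]) = hd (as @ [u])" by (cases as) simp_all
  ultimately show ?thesis using E_homotopic_iff[OF assms(1)] by simp
qed

section \<open>Generalized paths\<close>

lemma refl_ents: "E \<in> ents \<Longrightarrow> refl E"
  unfolding ents_def refl_on_def using uniformity_refl[of "\<lambda>p. p \<in> E"] by auto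

lemma ents_Int: "E \<in> ents \<Longrightarrow> F \<in> ents \<Longrightarrow> E \<inter> F \<in> ents"
  unfolding ents_def using eventually_conj by auto

lemma gen_path_ep_class:
  assumes "gen_path x y g" "E \<in> ents"
  obtains c where "edge_path UNIV E c" "hd c = x" "last c = y" "g E = ep_class UNIV E c"
  using assms unfolding gen_path_def by blast

lemma gen_path_memD:
  assumes "gen_path x y g" "E \<in> ents" "d \<in> g E"
  shows "edge_path UNIV E d \<and> hd d = x \<and> last d = y \<and> g E = ep_class UNIV E d"
proof -
  obtain c where c: "edge_path UNIV E c" "hd c = x" "last c = y" "g E = ep_class UNIV E c"
    using gen_path_ep_class[OF assms(1,2)] .
  then have "ep_equiv UNIV E c d" using assms(3) mem_ep_class_iff by blast
  then show ?thesis
    using c ep_equiv_edge_pathD(2) ep_equiv_hd_last ep_class_eq by metis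
qed

lemma gen_path_nonempty:
  assumes "gen_path x y g" "E \<in> ents"
  obtains d where "d \<in> g E"
  using gen_path_ep_class[OF assms] ep_equiv_refl mem_ep_class_iff by metis

lemma gen_path_ep_equiv:
  assumes "gen_path x y g" "E \<in> ents" "d \<in> g E" "d' \<in> g E"
  shows "ep_equiv UNIV E d d'"
  using gen_path_memD[OF assms(1-3)] assms(4) mem_ep_class_iff by blast

lemma gen_path_mono:
  assumes "gen_path x y g" "F \<in> ents" "E \<in> ents" "F \<subseteq> E"
  shows "g F \<subseteq> g E"
  using assms unfolding gen_path_def by blast

lemma gen_path_const_gp: "gen_path x0 x0 (const_gp x0)"
  unfolding gen_path_def const_gp_def
proof (intro conjI ballI allI impI)
  fix E :: "('a \<times> 'a) set"
  assume "E \<in> ents"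
  then show "\<exists>c. edge_path UNIV E c \<and> hd c = x0 \<and> last c = x0 \<and>
      (if E \<in> ents then ep_class UNIV E [x0] else {}) = ep_class UNIV E c"
    by (intro exI[of _ "[x0]"]) (simp add: edge_path_singleton_iff)
next
  fix E F :: "('a \<times> 'a) set"
  assume "E \<in> ents" "F \<in> ents" "F \<subseteq> E"
  then show "(if F \<in> ents then ep_class UNIV F [x0] else {}) \<subseteq>
      (if E \<in> ents then ep_class UNIV E [x0] else {})"
    unfolding ep_class_def by (auto intro: ep_equiv_mono)
qed simp

definition gp_join :: "'a::uniform_space gpath \<Rightarrow> 'a gpath \<Rightarrow> 'a gpath" where
  "gp_join g j E =
     (if E \<in> ents then ep_class UNIV E ((SOME c. c \<in> g E) @ tl (SOME d. d \<in> j E)) else {})"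

lemma gp_join_eq:
  assumes g: "gen_path x y g" and j: "gen_path y z j"
    and E: "E \<in> ents" and cd: "c \<in> g E" "d \<in> j E"
  shows "gp_join g j E = ep_class UNIV E (c @ tl d)"
proof -
  have some: "(SOME c. c \<in> g E) \<in> g E" "(SOME d. d \<in> j E) \<in> j E"
    using gen_path_nonempty[OF g E] gen_path_nonempty[OF j E] by (metis someI)+
  have "last (SOME c. c \<in> g E) = hd (SOME d. d \<in> j E)"
    using gen_path_memD[OF g E some(1)] gen_path_memD[OF j E some(2)] by simp
  then show ?thesis
    using ep_equiv_join[OF gen_path_ep_equiv[OF g E some(1) cd(1)] gen_path_ep_equiv[OF j E some(2) cd(2)]]
      ep_class_eq E unfolding gp_join_def by simp
qed

lemma gen_path_gp_join:
  assumes g: "gen_path x y g" and j: "gen_path y z j"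
  shows "gen_path x z (gp_join g j)"
  unfolding gen_path_def
proof (intro conjI ballI allI impI)
  fix E :: "('a \<times> 'a) set"
  assume "E \<notin> ents"
  then show "gp_join g j E = {}" unfolding gp_join_def by simp
next
  fix E :: "('a \<times> 'a) set"
  assume E: "E \<in> ents"
  obtain c d where cd: "c \<in> g E" "d \<in> j E"
    using gen_path_nonempty[OF g E] gen_path_nonempty[OF j E] by metis
  note c = gen_path_memD[OF g E cd(1)] and d = gen_path_memD[OF j E cd(2)]
  have "last (c @ tl d) = z"
    using c d edge_path_nonempty[of UNIV E d] by (cases d) auto
  then show "\<exists>c. edge_path UNIV E c \<and> hd c = x \<and> last c = z \<and> gp_join g j E = ep_class UNIV E c"
    using edge_path_join[of UNIV E c d] c d gp_join_eq[OF g j E cd] edge_path_nonempty[of UNIV E c]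
    by (intro exI[of _ "c @ tl d"]) simp
next
  fix E F :: "('a \<times> 'a) set"
  assume E: "E \<in> ents" and F: "F \<in> ents" and "F \<subseteq> E"
  obtain c d where cd: "c \<in> g F" "d \<in> j F"
    using gen_path_nonempty[OF g F] gen_path_nonempty[OF j F] by metis
  moreover have "c \<in> g E" "d \<in> j E"
    using cd gen_path_mono[OF g F E] gen_path_mono[OF j F E] \<open>F \<subseteq> E\<close> by blast+
  ultimately show "gp_join g j F \<subseteq> gp_join g j E"
    using gp_join_eq[OF g j F] gp_join_eq[OF g j E] \<open>F \<subseteq> E\<close>
    unfolding ep_class_def by (auto intro: ep_equiv_mono)
qed

lemma GP_star_mono:
  assumes "F' \<in> ents" "F \<in> ents" "F' \<subseteq> F"
  shows "GP_star x0 F' \<subseteq> GP_star x0 F"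
proof
  fix p
  assume "p \<in> GP_star x0 F'"
  then obtain g h c d where p: "p = (g, h)" "g \<in> GP x0" "h \<in> GP x0"
    and cd: "c \<in> g F'" "d \<in> h F'" "E_homotopic UNIV F' c d"
    unfolding GP_star_def by blast
  obtain y z where "gen_path x0 y g" "gen_path x0 z h" using p(2,3) unfolding GP_def by blast
  then have "c \<in> g F" "d \<in> h F" using gen_path_mono assms cd by blast+
  with p cd(3) show "p \<in> GP_star x0 F"
    unfolding GP_star_def using E_homotopic_mono[OF _ assms(3)] by blast
qed

section \<open>Lifting edge paths to the space of generalized paths\<close>

locale GP_contraction =
  fixes x0 :: "'a::uniform_space" and F F' :: "('a \<times> 'a) set"
  assumes F: "F \<in> ents" and F': "F' \<in> ents" and F'_subset: "F' \<subseteq> F"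
    and joinable: "\<And>x y. (x, y) \<in> F' \<Longrightarrow> \<exists>g. gen_path x y g \<and> short_gen_path F x y g"
begin

definition based_path :: "'a list \<Rightarrow> bool" where
  "based_path q \<longleftrightarrow> edge_path UNIV F' q \<and> hd q = x0"

lemma based_path_prefix: "based_path (xs @ ys) \<Longrightarrow> xs \<noteq> [] \<Longrightarrow> based_path xs"
  unfolding based_path_def by (cases "ys = []") (auto simp: edge_path_append_iff)

lemma based_path_ep_move:
  "ep_move UNIV F' p q \<Longrightarrow> based_path p \<longleftrightarrow> based_path q"
  unfolding based_path_def using ep_move_edge_path_iff ep_move_hd_last by metis

lemma lift_exists:
  "based_path q \<Longrightarrow> \<exists>g. gen_path x0 (last q) g \<and> g F = ep_class UNIV F q"
proof (induction q rule: rev_induct)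
  case Nil
  then show ?case unfolding based_path_def using edge_path_nonempty by blast
next
  case (snoc b q)
  show ?case
  proof (cases "q = []")
    case True
    then have "b = x0" using snoc.prems unfolding based_path_def by simp
    then show ?thesis
      using True gen_path_const_gp[of x0] F by (intro exI[of _ "const_gp x0"]) (simp add: const_gp_def)
  next
    case False
    have q: "based_path q" using based_path_prefix[OF snoc.prems False] .
    have "rips_simplex UNIV F' {last q, b}"
      using snoc.prems edge_path_snoc_iff[OF False] unfolding based_path_def by blast
    then have "(last q, b) \<in> F'" by (simp add: rips_simplex_pair_iff)
    then obtain j where j: "gen_path (last q) b j" "[last q, b] \<in> j F"
      using joinable unfolding short_gen_path_def by blast
    obtain g where g: "gen_path x0 (last q) g" "g F = ep_class UNIV F q"
      using snoc.IH[OF q] by blast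
    have "q \<in> g F"
      unfolding g(2) mem_ep_class_iff
      using q edge_path_mono[OF _ F'_subset] ep_equiv_refl unfolding based_path_def by blast
    then have "gp_join g j F = ep_class UNIV F (q @ [b])" using gp_join_eq[OF g(1) j(1) F _ j(2)] by simp
    with gen_path_gp_join[OF g(1) j(1)] show ?thesis by auto
  qed
qed

definition lift :: "'a list \<Rightarrow> 'a gpath" where
  "lift q = (SOME g. gen_path x0 (last q) g \<and> g F = ep_class UNIV F q)"

lemma lift_gen_path: "based_path q \<Longrightarrow> gen_path x0 (last q) (lift q) \<and> lift q F = ep_class UNIV F q"
  unfolding lift_def using lift_exists by (rule someI_ex)

lemma lift_ep_equiv:
  assumes "ep_equiv UNIV F' q q'"
  shows "lift q = lift q'"
proof -
  have "ep_class UNIV F q = ep_class UNIV F q'"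
    using ep_class_eq[OF ep_equiv_mono[OF assms F'_subset]] .
  moreover have "last q = last q'" using ep_equiv_hd_last(2)[OF assms] .
  ultimately show ?thesis unfolding lift_def by simp
qed

definition represents :: "'a gpath \<Rightarrow> 'a list \<Rightarrow> bool" where
  "represents g q \<longleftrightarrow> g \<in> GP x0 \<and> based_path q \<and> q \<in> g F"

lemma represents_lift:
  assumes "based_path q"
  shows "represents (lift q) q"
proof -
  have "edge_path UNIV F q" using assms edge_path_mono[OF _ F'_subset] unfolding based_path_def by blast
  then have "q \<in> lift q F" using lift_gen_path[OF assms] ep_equiv_refl mem_ep_class_iff by metis
  then show ?thesis using assms lift_gen_path[OF assms] unfolding represents_def GP_def by blast
qed

lemma E_homotopic_based_sym:
  "E_homotopic UNIV F' p q \<Longrightarrow> based_path p \<Longrightarrow> based_path q \<Longrightarrow> E_homotopic UNIV F' q p"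
  using E_homotopic_sym[OF refl_ents[OF F']] unfolding based_path_def by metis

lemma GP_star_if_E_homotopic:
  assumes "represents g p" "represents h q" "E_homotopic UNIV F' p q"
  shows "(g, h) \<in> GP_star x0 F"
  using assms E_homotopic_mono[OF _ F'_subset] unfolding represents_def GP_star_def by blast

lemma GP_star_refl: "represents g p \<Longrightarrow> (g, g) \<in> GP_star x0 F"
  using GP_star_if_E_homotopic E_homotopic_refl[OF refl_ents[OF F']]
  unfolding represents_def based_path_def by blast

lemma rips_simplex_GP_pair:
  assumes g: "represents g p" and h: "represents h q" and pq: "E_homotopic UNIV F' p q"
  shows "rips_simplex (GP x0) (GP_star x0 F) {g, h}"
proof -
  have "E_homotopic UNIV F' q p"
    using E_homotopic_based_sym[OF pq] g h unfolding represents_def by blast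
  then show ?thesis
    using GP_star_if_E_homotopic[OF g h pq] GP_star_if_E_homotopic[OF h g] GP_star_refl[OF g]
      GP_star_refl[OF h] g h
    unfolding rips_simplex_pair_iff represents_def by blast
qed

lemma rips_simplex_GP_triple:
  assumes "represents a p" "represents b q" "represents c r"
    and "E_homotopic UNIV F' q p" "E_homotopic UNIV F' r p" "E_homotopic UNIV F' r q"
  shows "rips_simplex (GP x0) (GP_star x0 F) {a, b, c}"
  using assms rips_simplex_GP_pair[of b q a p] rips_simplex_GP_pair[of c r a p]
    rips_simplex_GP_pair[of c r b q]
  unfolding rips_simplex_triple_iff rips_simplex_pair_iff by blast

definition lift_path :: "'a list \<Rightarrow> 'a gpath list" where
  "lift_path q = map (\<lambda>j. lift (take j q)) [1..<Suc (length q)]"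

lemma lift_path_Nil [simp]: "lift_path [] = []"
  unfolding lift_path_def by simp

lemma lift_path_snoc [simp]: "lift_path (q @ [b]) = lift_path q @ [lift (q @ [b])]"
proof -
  have "map (\<lambda>j. lift (take j (q @ [b]))) [1..<Suc (length q)] =
        map (\<lambda>j. lift (take j q)) [1..<Suc (length q)]"
    by (rule map_cong) auto
  then show ?thesis unfolding lift_path_def by simp
qed

lemma lift_path_butlast: "q \<noteq> [] \<Longrightarrow> lift_path q = lift_path (butlast q) @ [lift q]"
  using lift_path_snoc[of "butlast q" "last q"] by simp

lemma lift_path_append:
  "lift_path (P @ bs) = lift_path P @ map (\<lambda>j. lift (P @ take j bs)) [1..<Suc (length bs)]"
proof (induction bs rule: rev_induct)
  case (snoc b bs)
  have "map (\<lambda>j. lift (P @ take j (bs @ [b]))) [1..<Suc (length bs)] =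
        map (\<lambda>j. lift (P @ take j bs)) [1..<Suc (length bs)]"
    by (rule map_cong) auto
  with snoc show ?case by (simp flip: append_assoc)
qed simp

lemma edge_path_lift_path: "based_path q \<Longrightarrow> edge_path (GP x0) (GP_star x0 F) (lift_path q)"
proof (induction q rule: rev_induct)
  case Nil
  then show ?case unfolding based_path_def using edge_path_nonempty by blast
next
  case (snoc b q)
  have b: "represents (lift (q @ [b])) (q @ [b])" using represents_lift[OF snoc.prems] .
  show ?case
  proof (cases "q = []")
    case True
    with b show ?thesis
      using lift_path_snoc[of "[]" b] by (simp add: edge_path_singleton_iff represents_def)
  next
    case False
    have q: "based_path q" using based_path_prefix[OF snoc.prems False] .
    have "E_homotopic UNIV F' (q @ [b]) q"
      using E_homotopic_snoc[OF refl_ents[OF F'] _ False] snoc.prems unfolding based_path_def by blast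
    then have "rips_simplex (GP x0) (GP_star x0 F) {lift q, lift (q @ [b])}"
      using rips_simplex_GP_pair[OF b represents_lift[OF q]] by (simp add: insert_commute)
    moreover have ne: "lift_path q \<noteq> []" and "last (lift_path q) = lift q"
      using lift_path_butlast[OF False] by auto
    ultimately show ?thesis
      using snoc.IH[OF q] edge_path_snoc_iff[OF ne] by simp
  qed
qed

lemma lift_path_ep_move_append:
  assumes "based_path (P @ bs)" "P \<noteq> []" "ep_move UNIV F' P Q"
  shows "lift_path (Q @ bs) = lift_path Q @ map (\<lambda>j. lift (P @ take j bs)) [1..<Suc (length bs)]"
proof -
  have "lift (Q @ take j bs) = lift (P @ take j bs)" for j
  proof -
    have "based_path (P @ take j bs)"
      using based_path_prefix[of "P @ take j bs" "drop j bs"] assms(1,2) by simp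
    moreover have "ep_move UNIV F' ([] @ P @ take j bs) ([] @ Q @ take j bs)"
      using ep_move_append[OF assms(3)] .
    ultimately show ?thesis
      using ep_equiv_if_ep_move lift_ep_equiv unfolding based_path_def by (metis append_Nil)
  qed
  then show ?thesis using lift_path_append[of Q bs] by simp
qed

lemma rips_simplex_lift_triple:
  assumes P: "based_path (as @ [u, v, w])" and uvw: "rips_simplex UNIV F' {u, v, w}"
  shows "rips_simplex (GP x0) (GP_star x0 F) {lift (as @ [u]), lift (as @ [u, v]), lift (as @ [u, v, w])}"
proof -
  have "based_path (as @ [u])" "based_path (as @ [u, v])"
    using based_path_prefix[of "as @ [u]" "[v, w]"] based_path_prefix[of "as @ [u, v]" "[w]"] P
    by simp_all
  moreover have "E_homotopic UNIV F' (as @ [u, v]) (as @ [u])"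
    using E_homotopic_snoc[OF refl_ents[OF F'], of "as @ [u]" v] calculation(2)
    unfolding based_path_def by simp
  moreover have "E_homotopic UNIV F' (as @ [u, v, w]) (as @ [u])"
    using E_homotopic_skip[OF refl_ents[OF F'] _ uvw] P unfolding based_path_def by simp
  moreover have "E_homotopic UNIV F' (as @ [u, v, w]) (as @ [u, v])"
    using E_homotopic_snoc[OF refl_ents[OF F'], of "as @ [u, v]" w] P unfolding based_path_def by simp
  ultimately show ?thesis
    using rips_simplex_GP_triple represents_lift P by blast
qed

lemma lift_path_ep_move:
  assumes p: "based_path p" and move: "ep_move UNIV F' p p'"
  shows "ep_move (GP x0) (GP_star x0 F) (lift_path p) (lift_path p')"
  using move
proof (cases rule: ep_moveE)
  case (skip as u v w bs)
  let ?P = "as @ [u, v, w]" and ?Q = "as @ [u, w]"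
  let ?T = "map (\<lambda>j. lift (?P @ take j bs)) [1..<Suc (length bs)]"
  have P: "based_path ?P" using based_path_prefix[of ?P bs] p skip(1) by simp
  have PQ: "ep_move UNIV F' (?P @ []) (?Q @ [])"
    using ep_move_skipI[OF skip(3), of as "[]"] by simp
  have lift_PQ: "lift ?Q = lift ?P"
    using lift_ep_equiv ep_equiv_if_ep_move[of UNIV F' ?P ?Q] PQ P unfolding based_path_def by simp
  from rips_simplex_lift_triple[OF P skip(3)]
  have "ep_move (GP x0) (GP_star x0 F)
      (lift_path as @ [lift (as @ [u]), lift (as @ [u, v]), lift ?P] @ ?T)
      (lift_path as @ [lift (as @ [u]), lift ?P] @ ?T)"
    by (rule ep_move_skipI)
  moreover have "lift_path ?P = lift_path as @ [lift (as @ [u]), lift (as @ [u, v]), lift ?P]"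
    and "lift_path ?Q = lift_path as @ [lift (as @ [u]), lift ?Q]"
    using lift_path_snoc[of "as @ [u]" v] lift_path_snoc[of "as @ [u, v]" w]
      lift_path_snoc[of as u] lift_path_snoc[of "as @ [u]" w] by simp_all
  moreover have "lift_path p = lift_path ?P @ ?T" "lift_path p' = lift_path ?Q @ ?T"
    using lift_path_append[of ?P bs] lift_path_ep_move_append[of ?P bs ?Q] p PQ skip(1,2) by simp_all
  ultimately show ?thesis using lift_PQ by simp
next
  case (stutter as u bs)
  let ?P = "as @ [u, u]" and ?Q = "as @ [u]"
  let ?T = "map (\<lambda>j. lift (?P @ take j bs)) [1..<Suc (length bs)]"
  have P: "based_path ?P" using based_path_prefix[of ?P bs] p stutter(1) by simp
  have Q: "based_path ?Q" using based_path_prefix[of ?Q "[u]"] P by simp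
  have PQ: "ep_move UNIV F' (?P @ []) (?Q @ [])"
    using ep_move_stutterI[OF stutter(3), of as "[]"] by simp
  have lift_PQ: "lift ?P = lift ?Q"
    using lift_ep_equiv ep_equiv_if_ep_move[of UNIV F' ?P ?Q] PQ P unfolding based_path_def by simp
  have "rips_simplex (GP x0) (GP_star x0 F) {lift ?Q}"
    using represents_lift[OF Q] GP_star_refl[OF represents_lift[OF Q]]
    unfolding rips_simplex_singleton_iff represents_def by blast
  then have "ep_move (GP x0) (GP_star x0 F)
      (lift_path as @ [lift ?Q, lift ?Q] @ ?T) (lift_path as @ [lift ?Q] @ ?T)"
    by (rule ep_move_stutterI)
  moreover have "lift_path p = lift_path ?P @ ?T" "lift_path p' = lift_path ?Q @ ?T"
    using lift_path_append[of ?P bs] lift_path_ep_move_append[of ?P bs ?Q] p PQ stutter(1,2)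
    by simp_all
  ultimately show ?thesis
    using lift_PQ lift_path_snoc[of ?Q u] lift_path_snoc[of as u] by simp
qed

lemma lift_path_ep_equiv:
  assumes "based_path p" "ep_equiv UNIV F' p p'"
  shows "ep_equiv (GP x0) (GP_star x0 F) (lift_path p) (lift_path p')"
proof -
  have "equivclp (ep_move UNIV F') p p'" using assms(2) unfolding ep_equiv_iff_equivclp by blast
  then have "equivclp (ep_move (GP x0) (GP_star x0 F)) (lift_path p) (lift_path p')"
    by (rule equivclp_map[where P = based_path])
      (use assms(1) based_path_ep_move lift_path_ep_move in blast)+
  then show ?thesis
    using edge_path_lift_path[OF assms(1)] unfolding ep_equiv_iff_equivclp by blast
qed

definition rep :: "'a gpath \<Rightarrow> 'a list" where
  "rep g = (SOME c. c \<in> g F')"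

lemma rep_mem:
  assumes "g \<in> GP x0"
  shows "rep g \<in> g F'"
proof -
  obtain y where "gen_path x0 y g" using assms unfolding GP_def by blast
  then obtain c where "c \<in> g F'" using gen_path_nonempty[OF _ F'] by blast
  then show ?thesis unfolding rep_def by (rule someI)
qed

lemma represents_rep:
  assumes "g \<in> GP x0"
  shows "represents g (rep g)"
proof -
  obtain y where y: "gen_path x0 y g" using assms unfolding GP_def by blast
  have "rep g \<in> g F" using gen_path_mono[OF y F' F F'_subset] rep_mem[OF assms] by blast
  then show ?thesis
    using assms gen_path_memD[OF y F' rep_mem[OF assms]] unfolding represents_def based_path_def by simp
qed

lemma based_path_rep: "g \<in> GP x0 \<Longrightarrow> based_path (rep g)"
  using represents_rep unfolding represents_def by blast

definition ray :: "'a gpath \<Rightarrow> 'a gpath list" where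
  "ray g = lift_path (rep g) @ [g]"

lemma edge_path_ray:
  assumes g: "g \<in> GP x0"
  shows "edge_path (GP x0) (GP_star x0 F) (ray g)"
proof -
  have p: "based_path (rep g)" using based_path_rep[OF g] .
  have "E_homotopic UNIV F' (rep g) (rep g)"
    using E_homotopic_refl[OF refl_ents[OF F']] p unfolding based_path_def by blast
  then have "rips_simplex (GP x0) (GP_star x0 F) {lift (rep g), g}"
    using rips_simplex_GP_pair[OF represents_lift[OF p] represents_rep[OF g]] by blast
  moreover have ne: "lift_path (rep g) \<noteq> []" and "last (lift_path (rep g)) = lift (rep g)"
    using lift_path_butlast p edge_path_nonempty unfolding based_path_def by (metis snoc_eq_iff_butlast)+
  ultimately show ?thesis
    unfolding ray_def using edge_path_lift_path[OF p] edge_path_snoc_iff[OF ne] by simp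
qed

lemma E_homotopic_rep:
  assumes "(g, h) \<in> GP_star x0 F'"
  shows "E_homotopic UNIV F' (rep g) (rep h)"
proof -
  obtain a b where g: "g \<in> GP x0" and h: "h \<in> GP x0"
    and ab: "a \<in> g F'" "b \<in> h F'" "E_homotopic UNIV F' a b"
    using assms unfolding GP_star_def by blast
  obtain y z where y: "gen_path x0 y g" and z: "gen_path x0 z h" using g h unfolding GP_def by blast
  show ?thesis
    using E_homotopic_ep_equiv_cong[OF refl_ents[OF F'] _ ab(3)]
      gen_path_ep_equiv[OF y F' ab(1) rep_mem[OF g]] gen_path_ep_equiv[OF z F' ab(2) rep_mem[OF h]]
      gen_path_memD[OF y F' ab(1)] gen_path_memD[OF z F' ab(2)] by simp
qed

lemma ray_step:
  assumes gh: "(g, h) \<in> GP_star x0 F'" and path: "edge_path (GP x0) (GP_star x0 F) (ray g @ [h])"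
  shows "ep_equiv (GP x0) (GP_star x0 F) (ray g @ [h]) (ray h)"
proof -
  have g: "g \<in> GP x0" and h: "h \<in> GP x0" using gh unfolding GP_star_def by auto
  have pg: "based_path (rep g)" and ph: "based_path (rep h)" using based_path_rep g h by auto
  have hd_eq: "hd (rep g) = hd (rep h)" using pg ph unfolding based_path_def by simp
  have gh': "E_homotopic UNIV F' (rep g) (rep h)" using E_homotopic_rep[OF gh] .
  have hg': "E_homotopic UNIV F' (rep h) (rep g)" using E_homotopic_based_sym[OF gh' pg ph] .
  have gg: "E_homotopic UNIV F' (rep g) (rep g)" and hh: "E_homotopic UNIV F' (rep h) (rep h)"
    using E_homotopic_refl[OF refl_ents[OF F']] pg ph unfolding based_path_def by blast+
  define A where "A = lift_path (butlast (rep h))"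
  define Lg where "Lg = lift (rep g)"
  define Lh where "Lh = lift (rep h)"
  have lift_path_h: "lift_path (rep h) = A @ [Lh]"
    unfolding A_def Lh_def using lift_path_butlast ph edge_path_nonempty unfolding based_path_def by blast
  txt \<open>Up to F'-homotopy, rep g is rep h followed by one more vertex, so the lifted path of
    rep g is that of rep h followed by Lg; the triangles {Lg, g, h} and {Lh, Lg, h} then
    remove the detour through Lg and g.\<close>
  have "ep_equiv UNIV F' (rep g) (rep h @ [last (rep g)])"
    using E_homotopic_iff[OF refl_ents[OF F'] hd_eq] gh' by blast
  then have "ep_equiv (GP x0) (GP_star x0 F) (lift_path (rep g)) (A @ [Lh, Lg])"
    using lift_path_ep_equiv[OF pg] lift_ep_equiv lift_path_h unfolding Lg_def by fastforce
  from ep_equiv_append[OF this, of "[]" "[g, h]"] path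
  have "ep_equiv (GP x0) (GP_star x0 F) (ray g @ [h]) (A @ [Lh, Lg, g, h])"
    unfolding ray_def by simp
  also have "ep_equiv (GP x0) (GP_star x0 F) \<dots> (A @ [Lh, Lg, h])"
  proof -
    have "rips_simplex (GP x0) (GP_star x0 F) {Lg, g, h}"
      using rips_simplex_GP_triple[OF represents_lift[OF pg] represents_rep[OF g] represents_rep[OF h] gg hg' hg']
      unfolding Lg_def .
    then show ?thesis
      using ep_equiv_if_ep_move ep_move_skipI[of "GP x0" "GP_star x0 F" Lg g h "A @ [Lh]" "[]"]
        ep_equiv_edge_pathD(2)[OF calculation] by simp
  qed
  also have "ep_equiv (GP x0) (GP_star x0 F) \<dots> (A @ [Lh, h])"
  proof -
    have "rips_simplex (GP x0) (GP_star x0 F) {Lh, Lg, h}"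
      using rips_simplex_GP_triple[OF represents_lift[OF ph] represents_lift[OF pg] represents_rep[OF h] gh' hh hg']
      unfolding Lg_def Lh_def .
    then show ?thesis
      using ep_equiv_if_ep_move ep_move_skipI[of "GP x0" "GP_star x0 F" Lh Lg h A "[]"]
        ep_equiv_edge_pathD(2)[OF calculation] by simp
  qed
  finally show ?thesis unfolding ray_def lift_path_h by simp
qed

lemma ep_equiv_ray_take:
  assumes L: "edge_path (GP x0) (GP_star x0 F') L" and "k < length L"
  shows "ep_equiv (GP x0) (GP_star x0 F) (lift_path (rep (hd L)) @ take (Suc k) L) (ray (L ! k))"
  using \<open>k < length L\<close>
proof (induction k)
  case 0
  have "L \<noteq> []" using edge_path_nonempty[OF L] .
  then have "hd L \<in> GP x0" "take (Suc 0) L = [L ! 0]" "L ! 0 = hd L"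
    using L unfolding edge_path_def by (auto simp: hd_conv_nth take_Suc_conv_app_nth)
  then show ?case using ep_equiv_refl[OF edge_path_ray] unfolding ray_def by simp
next
  case (Suc k)
  have IH: "ep_equiv (GP x0) (GP_star x0 F) (lift_path (rep (hd L)) @ take (Suc k) L) (ray (L ! k))"
    using Suc by simp
  have edge: "rips_simplex (GP x0) (GP_star x0 F') {L ! k, L ! Suc k}"
    using L Suc.prems unfolding edge_path_def by blast
  have take_Suc: "take (Suc (Suc k)) L = take (Suc k) L @ [L ! Suc k]"
    using Suc.prems by (simp add: take_Suc_conv_app_nth)
  have "last (lift_path (rep (hd L)) @ take (Suc k) L) = L ! k"
    using Suc.prems by (simp add: take_Suc_conv_app_nth)
  then have "edge_path (GP x0) (GP_star x0 F) ((lift_path (rep (hd L)) @ take (Suc k) L) @ [L ! Suc k])"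
    using ep_equiv_edge_pathD(1)[OF IH] rips_simplex_mono[OF edge GP_star_mono[OF F' F F'_subset]]
      edge_path_snoc_iff[OF edge_path_nonempty[OF ep_equiv_edge_pathD(1)[OF IH]]] by simp
  then have "ep_equiv (GP x0) (GP_star x0 F)
      (lift_path (rep (hd L)) @ take (Suc (Suc k)) L) (ray (L ! k) @ [L ! Suc k])"
    using ep_equiv_append[OF IH, of "[]" "[L ! Suc k]"] take_Suc by simp
  also have "ep_equiv (GP x0) (GP_star x0 F) \<dots> (ray (L ! Suc k))"
    using ray_step edge ep_equiv_edge_pathD(2)[OF calculation] by (simp add: rips_simplex_pair_iff)
  finally show ?case .
qed

lemma loop_ep_equiv_const_gp:
  assumes L: "edge_path (GP x0) (GP_star x0 F') L"
    and hd: "hd L = const_gp x0" and last: "last L = const_gp x0"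
  shows "ep_equiv (GP x0) (GP_star x0 F) L [const_gp x0]"
proof -
  let ?c0 = "rep (const_gp x0)"
  have "L \<noteq> []" using edge_path_nonempty[OF L] .
  have g0: "const_gp x0 \<in> GP x0" using gen_path_const_gp unfolding GP_def by blast
  have "ep_equiv (GP x0) (GP_star x0 F) (lift_path ?c0 @ L) (lift_path ?c0 @ [const_gp x0])"
    using ep_equiv_ray_take[OF L, of "length L - 1"] \<open>L \<noteq> []\<close> hd last
    unfolding ray_def by (simp add: last_conv_nth)
  moreover have "ep_equiv (GP x0) (GP_star x0 F) (lift_path ?c0) [lift [x0]]"
  proof -
    have "?c0 \<in> ep_class UNIV F' [x0]" using rep_mem[OF g0] F' unfolding const_gp_def by simp
    then have "ep_equiv UNIV F' [x0] ?c0" by (simp add: mem_ep_class_iff)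
    moreover have "based_path [x0]" unfolding based_path_def by (simp add: edge_path_singleton_iff)
    ultimately show ?thesis
      using lift_path_ep_equiv lift_path_snoc[of "[]" x0] ep_equiv_sym by fastforce
  qed
  ultimately show ?thesis using \<open>L \<noteq> []\<close> hd by (rule ep_equiv_cancel_prefix)
qed

end

theorem mainTheorem11:
  fixes x0 :: "'a::uniform_space"
  assumes "uniformly_joinable TYPE('a)"
  shows "pro_pi1_trivial (GP x0) (GP_ents x0) (const_gp x0)"
  unfolding pro_pi1_trivial_def
proof
  fix W
  assume "W \<in> GP_ents x0"
  then obtain F where F_ent: "F \<in> ents" and F_W: "GP_star x0 F \<subseteq> W" unfolding GP_ents_def by blast
  then obtain F0 where F0: "F0 \<in> ents"
    and join: "\<And>x y. (x, y) \<in> F0 \<Longrightarrow> \<exists>g. gen_path x y g \<and> short_gen_path F x y g"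
    using assms unfolding uniformly_joinable_def by blast
  define F' where "F' = F \<inter> F0"
  interpret GP_contraction x0 F F'
    using F_ent ents_Int[OF F_ent F0] join unfolding F'_def by unfold_locales auto
  have "GP_star x0 F' \<in> GP_ents x0"
    using F' unfolding GP_ents_def GP_star_def by blast
  moreover have "GP_star x0 F' \<subseteq> W" using GP_star_mono[OF F' F_ent F'_subset] F_W by blast
  moreover have "ep_equiv (GP x0) W L [const_gp x0]"
    if "edge_path (GP x0) (GP_star x0 F') L" "hd L = const_gp x0" "last L = const_gp x0" for L
    using ep_equiv_mono[OF loop_ep_equiv_const_gp[OF that] F_W] .
  ultimately show "\<exists>V\<in>GP_ents x0. V \<subseteq> W \<and> (\<forall>c. edge_path (GP x0) V c \<and> hd c = const_gp x0 \<and>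
      last c = const_gp x0 \<longrightarrow> ep_equiv (GP x0) W c [const_gp x0])"
    by blast
qed

end
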